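(* Fix an integer $r\ge1$. For $\ell\ge2$ with $r<2^{\ell-1}$ (so that $r<q/2$ for $q=2^\ell$), the sets $S_t(\cdot)$ defined below satisfy $$|S_0(\ell)|=3|S_0(\ell-1)|+|S_1(\ell-1)|,\quad |S_1(\ell)|=|S_0(\ell-1)|+|S_1(\ell-1)|+|S_2(\ell-1)|,\quad |S_2(\ell)|=|S_2(\ell-1)|.$$
   Context: For $\ell\ge1$, $Q=2^\ell$ and an integer $t\ge0$, $S_t(\ell)$ is the set of pairs $(a,b)$ of integers with $0\le a,b\le Q-1$ for which there exist integers $i,j\ge0$ with $i\le_2 b$, $j\le_2 b-i$ and $2i+j+a=Q-r'+tQ$ for some $r'\in\{1,\dots,r\}$. Here $u\le_2 w$ means every binary digit of $u$ is at most the corresponding binary digit of $w$. *)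

theory Defs
  imports Main
begin

definition bin_le :: "nat \<Rightarrow> nat \<Rightarrow> bool" where
  "bin_le u w \<longleftrightarrow> (\<forall>k. bit u k \<longrightarrow> bit w k)"

definition S_set :: "nat \<Rightarrow> nat \<Rightarrow> nat \<Rightarrow> (nat \<times> nat) set" where
  "S_set r t l = {(a, b). a \<le> 2^l - 1 \<and> b \<le> 2^l - 1 \<and>
     (\<exists>i j r'. bin_le i b \<and> bin_le j (b - i) \<and> r' \<in> {1..r} \<and>
        int (2*i + j + a) = int (2^l) - int r' + int t * int (2^l))}"

end

theory Submission
  imports Defs
begin

(* Write a = a1 2^k + a0 and b = b1 2^k + b0 with top bits a1, b1. The values 2i + j
   admissible for b are exactly c 2^k + w0 with c \<le> 2 b1 and w0 admissible for b0, so
   (a, b) lies in S_t(k+1) iff (a0, b0) lies in S_s(k) for some s with a1 + c + s = 2t + 1.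
   As S_s(k) shrinks when s grows, c = 2 b1 is the best choice, and summing over the four
   pairs of top bits gives |S_t(k+1)| = |S_2t+1(k)| + |S_2t(k)| + |S_2t-1(k)| + |S_2t-2(k)|,
   negative indices read as 0. Finally S_s(k) is empty for s \<ge> 3 once r < 2^k, because
   a + 2b + r' < 4 * 2^k. *)

lemma bin_le_refl: "bin_le x x"
  by (simp add: bin_le_def)

lemma bin_le_0: "bin_le 0 y"
  by (simp add: bin_le_def)

lemma bin_le_imp_le:
  assumes "bin_le x y" shows "x \<le> y"
proof -
  have "and x y = x"
    using assms unfolding bin_le_def by (intro bit_eqI) (auto simp: bit_and_iff)
  moreover have "and x y \<le> y"
    by (metis AND_upper2 of_nat_0_le_iff of_nat_and_eq of_nat_le_iff)
  ultimately show ?thesis by simp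
qed

lemma bin_le_split:
  "bin_le x y \<longleftrightarrow> bin_le (x mod 2^k) (y mod 2^k) \<and> bin_le (x div 2^k) (y div 2^k)"
proof -
  have "bit (z mod 2^k) n \<longleftrightarrow> n < k \<and> bit z n" for z :: nat and n
    by (metis bit_take_bit_iff take_bit_eq_mod)
  moreover have "bit (z div 2^k) n \<longleftrightarrow> bit z (k + n)" for z :: nat and n
    by (metis bit_drop_bit_eq comp_apply drop_bit_eq_div)
  ultimately show ?thesis unfolding bin_le_def
    by (metis le_add_diff_inverse not_less)
qed

lemma bin_le_concat:
  assumes "x0 < 2^k" and "y0 < 2^k"
  shows "bin_le (x1 * 2^k + x0) (y1 * 2^k + y0) \<longleftrightarrow> bin_le x0 y0 \<and> bin_le x1 y1"
  using bin_le_split[of "x1 * 2^k + x0" "y1 * 2^k + y0" k] assms by simp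

definition dominated_sum :: "nat \<Rightarrow> nat \<Rightarrow> bool" where
  "dominated_sum b w \<longleftrightarrow> (\<exists>i j. bin_le i b \<and> bin_le j (b - i) \<and> w = 2*i + j)"

lemma dominated_sum_0: "dominated_sum b 0"
  unfolding dominated_sum_def using bin_le_0 by auto

lemma dominated_sum_le: "dominated_sum b w \<Longrightarrow> w \<le> 2*b"
  unfolding dominated_sum_def by (auto dest!: bin_le_imp_le)

lemma dominated_sum_concat:
  assumes b0: "b0 < 2^k"
  shows "dominated_sum (b1 * 2^k + b0) w \<longleftrightarrow>
    (\<exists>w1 w0. dominated_sum b1 w1 \<and> dominated_sum b0 w0 \<and> w = w1 * 2^k + w0)"
proof
  assume "dominated_sum (b1 * 2^k + b0) w"
  then obtain i j where i: "bin_le i (b1 * 2^k + b0)" and j: "bin_le j (b1 * 2^k + b0 - i)"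
    and w: "w = 2*i + j"
    unfolding dominated_sum_def by blast
  define i1 i0 j1 j0 where "i1 = i div 2^k" "i0 = i mod 2^k" "j1 = j div 2^k" "j0 = j mod 2^k"
  have i_eq: "i = i1 * 2^k + i0" and j_eq: "j = j1 * 2^k + j0"
    by (simp_all add: i1_i0_j1_j0_def div_mult_mod_eq)
  have i0: "i0 < 2^k" and j0: "j0 < 2^k"
    by (simp_all add: i1_i0_j1_j0_def)
  have "bin_le i0 b0" "bin_le i1 b1"
    using i bin_le_concat[OF i0 b0] i_eq by simp_all
  then have "i0 \<le> b0" "i1 \<le> b1" by (simp_all add: bin_le_imp_le)
  then have "b1 * 2^k + b0 - i = (b1 - i1) * 2^k + (b0 - i0)"
    by (simp add: i_eq diff_mult_distrib)
  moreover have "b0 - i0 < 2^k" using b0 by linarith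
  ultimately have "bin_le j0 (b0 - i0)" "bin_le j1 (b1 - i1)"
    using j bin_le_concat[OF j0] j_eq by simp_all
  then have "dominated_sum b1 (2*i1 + j1)" "dominated_sum b0 (2*i0 + j0)"
    using \<open>bin_le i0 b0\<close> \<open>bin_le i1 b1\<close> unfolding dominated_sum_def by blast+
  moreover have "w = (2*i1 + j1) * 2^k + (2*i0 + j0)"
    by (simp add: w i_eq j_eq algebra_simps)
  ultimately show "\<exists>w1 w0. dominated_sum b1 w1 \<and> dominated_sum b0 w0 \<and> w = w1 * 2^k + w0"
    by blast
next
  assume "\<exists>w1 w0. dominated_sum b1 w1 \<and> dominated_sum b0 w0 \<and> w = w1 * 2^k + w0"
  then obtain i1 j1 i0 j0 where i1: "bin_le i1 b1" and j1: "bin_le j1 (b1 - i1)"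
    and i0: "bin_le i0 b0" and j0: "bin_le j0 (b0 - i0)"
    and w: "w = (2*i1 + j1) * 2^k + (2*i0 + j0)"
    unfolding dominated_sum_def by blast
  have "i0 \<le> b0" "i1 \<le> b1" "j0 \<le> b0 - i0" using i0 i1 j0 by (simp_all add: bin_le_imp_le)
  then have lt: "i0 < 2^k" "b0 - i0 < 2^k" "j0 < 2^k" using b0 by linarith+
  have "b1 * 2^k + b0 - (i1 * 2^k + i0) = (b1 - i1) * 2^k + (b0 - i0)"
    using \<open>i0 \<le> b0\<close> \<open>i1 \<le> b1\<close> by (simp add: diff_mult_distrib)
  then have "bin_le (i1 * 2^k + i0) (b1 * 2^k + b0)"
    and "bin_le (j1 * 2^k + j0) (b1 * 2^k + b0 - (i1 * 2^k + i0))"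
    using bin_le_concat[OF lt(1) b0] bin_le_concat[OF lt(3,2)] i0 i1 j0 j1 by simp_all
  moreover have "w = 2 * (i1 * 2^k + i0) + (j1 * 2^k + j0)"
    by (simp add: w algebra_simps)
  ultimately show "dominated_sum (b1 * 2^k + b0) w"
    unfolding dominated_sum_def by blast
qed

lemma dominated_sum_le_1:
  assumes "b \<le> 1" shows "dominated_sum b c \<longleftrightarrow> c \<le> 2*b"
proof
  assume "c \<le> 2*b"
  then consider "c = 0" | "b = 1" "c = 1" | "b = 1" "c = 2"
    using assms by linarith
  then show "dominated_sum b c"
    unfolding dominated_sum_def using bin_le_0 bin_le_refl by cases force+
qed (rule dominated_sum_le)

lemma top_bit_split:
  assumes "(b::nat) < 2^Suc k"
  shows "b div 2^k \<le> 1" and "b mod 2^k < 2^k"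
proof -
  have "b div 2^k < 2"
    using assms by (metis less_mult_imp_div_less mult.commute power_Suc)
  then show "b div 2^k \<le> 1" by simp
qed simp

lemma dominated_sum_sub_pow:
  assumes "b < 2^k" and "dominated_sum b w" and "2^k \<le> w"
  shows "dominated_sum b (w - 2^k)"
  using assms
proof (induction k arbitrary: b w)
  case 0
  then show ?case using dominated_sum_le[of b w] by simp
next
  case (Suc k)
  define b1 b0 where "b1 = b div 2^k" and "b0 = b mod 2^k"
  note b = top_bit_split[OF Suc.prems(1), folded b1_def b0_def]
  have b_eq: "b = b1 * 2^k + b0" by (simp add: b1_def b0_def div_mult_mod_eq)
  obtain w1 w0 where w1: "dominated_sum b1 w1" and w0: "dominated_sum b0 w0"
    and w: "w = w1 * 2^k + w0"
    using Suc.prems(2) dominated_sum_concat[OF b(2)] b_eq by metis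
  have "w0 \<le> 2*b0" using dominated_sum_le[OF w0] .
  moreover have "w1 = 0 \<or> w1 = 1 \<or> w1 = 2" using dominated_sum_le[OF w1] b(1) by linarith
  ultimately consider "w1 = 1" "2^k \<le> w0" | "w1 = 2"
    using Suc.prems(3) b(2) w by fastforce
  then obtain w0' where "dominated_sum b0 w0'" "w - 2^Suc k = 0 * 2^k + w0'"
  proof cases
    case 1
    then show ?thesis using that[of "w0 - 2^k"] Suc.IH[OF b(2) w0] w by simp
  next
    case 2
    then show ?thesis using that[of w0] w0 w by simp
  qed
  then show ?case
    using dominated_sum_concat[OF b(2)] dominated_sum_0 b_eq by metis
qed

definition S_cond :: "nat \<Rightarrow> nat \<Rightarrow> nat \<Rightarrow> nat \<Rightarrow> nat \<Rightarrow> bool" where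
  "S_cond r t k a b \<longleftrightarrow> (\<exists>w r'. dominated_sum b w \<and> r' \<in> {1..r} \<and> a + w + r' = (t+1) * 2^k)"

lemma S_set_eq: "S_set r t k = {(a, b). a < 2^k \<and> b < 2^k \<and> S_cond r t k a b}"
proof -
  have bound: "a \<le> 2^k - 1 \<longleftrightarrow> a < (2::nat)^k" for a :: nat
    using zero_less_power[of "2::nat" k] by linarith
  have int_eq: "int x = int (2^k) - int r' + int t * int (2^k) \<longleftrightarrow> x + r' = (t+1) * 2^k"
    for x r' :: nat
    by (subst of_nat_eq_iff[symmetric, where 'a = int]) (simp add: algebra_simps)
  have "S_cond r t k a b \<longleftrightarrow>
    (\<exists>i j r'. bin_le i b \<and> bin_le j (b - i) \<and> r' \<in> {1..r} \<and> 2*i + j + a + r' = (t+1) * 2^k)"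
    for a b
    unfolding S_cond_def dominated_sum_def by safe (metis add.commute)+
  then show ?thesis unfolding S_set_def bound int_eq by simp
qed

lemma S_cond_Suc_imp:
  assumes a: "a < 2^k" and b: "b < 2^k" and "S_cond r (Suc s) k a b"
  shows "S_cond r s k a b"
proof -
  obtain w r' where w: "dominated_sum b w" and r': "r' \<in> {1..r}"
    and eq: "a + w + r' = (s+1) * 2^k + 2^k"
    using assms(3) unfolding S_cond_def by (auto simp: algebra_simps)
  show ?thesis
  proof (cases "2^k \<le> w")
    case True
    then have "dominated_sum b (w - 2^k) \<and> a + (w - 2^k) + r' = (s+1) * 2^k"
      using dominated_sum_sub_pow[OF b w] eq by simp
    then show ?thesis unfolding S_cond_def using r' by blast
  next
    case False
    \<comment> \<open>as \<open>a, w < 2^k\<close>, the excess \<open>2^k\<close> can be absorbed by \<open>r'\<close> instead, with \<open>w\<close> replaced by \<open>0\<close>\<close>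
    have "(s+1) * 2^k \<ge> (2::nat)^k" by simp
    then have "dominated_sum b 0 \<and> r' + w - 2^k \<in> {1..r} \<and> a + 0 + (r' + w - 2^k) = (s+1) * 2^k"
      using False a eq r' dominated_sum_0 by auto
    then show ?thesis unfolding S_cond_def by blast
  qed
qed

lemma S_cond_antimono:
  assumes "a < 2^k" and "b < 2^k" and "S_cond r s k a b" and "s' \<le> s"
  shows "S_cond r s' k a b"
proof -
  have "S_cond r (s' + d) k a b \<Longrightarrow> S_cond r s' k a b" for d
    by (induction d) (auto intro: S_cond_Suc_imp assms(1,2))
  then show ?thesis using assms(3,4) le_add_diff_inverse by metis
qed

lemma S_cond_level_le_2:
  assumes "a < 2^k" and "b < 2^k" and "r < 2^k" and "S_cond r s k a b"
  shows "s \<le> 2"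
proof -
  obtain w r' where w: "dominated_sum b w" and "r' \<le> r" "a + w + r' = (s+1) * 2^k"
    using assms(4) unfolding S_cond_def by auto
  then have "(s+1) * 2^k < 4 * 2^k" using dominated_sum_le[OF w] assms(1-3) by linarith
  then show ?thesis by simp
qed

lemma S_cond_top_bit_iff_exists:
  assumes a0: "a0 < 2^k" and b0: "b0 < 2^k" and b1: "b1 \<le> 1"
  shows "S_cond r t (Suc k) (a1 * 2^k + a0) (b1 * 2^k + b0) \<longleftrightarrow>
    (\<exists>w1 s. w1 \<le> 2*b1 \<and> a1 + w1 + s = 2*t + 1 \<and> S_cond r s k a0 b0)"
proof
  assume "S_cond r t (Suc k) (a1 * 2^k + a0) (b1 * 2^k + b0)"
  then obtain w r' where w: "dominated_sum (b1 * 2^k + b0) w" and r': "r' \<in> {1..r}"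
    and eq: "a1 * 2^k + a0 + w + r' = (t+1) * 2^Suc k"
    unfolding S_cond_def by blast
  obtain w1 w0 where w1: "w1 \<le> 2*b1" and w0: "dominated_sum b0 w0" and w_eq: "w = w1 * 2^k + w0"
    using w dominated_sum_concat[OF b0] dominated_sum_le_1[OF b1] by blast
  have eq': "(a1 + w1) * 2^k + (a0 + w0 + r') = (2*t + 2) * 2^k"
    using eq w_eq by (simp add: algebra_simps)
  with r' have "(a1 + w1) * 2^k < (2*t + 2) * 2^k" by auto
  then have lt: "a1 + w1 < 2*t + 2" using mult_less_cancel2 by blast
  define s where "s = 2*t + 1 - (a1 + w1)"
  have "2*t + 2 = (a1 + w1) + (s+1)" using lt s_def by linarith
  then have "(2*t + 2) * 2^k = (a1 + w1) * 2^k + (s+1) * 2^k" by (metis add_mult_distrib)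
  then have "a0 + w0 + r' = (s+1) * 2^k" using eq' by linarith
  then have "S_cond r s k a0 b0" unfolding S_cond_def using w0 r' by blast
  then show "\<exists>w1 s. w1 \<le> 2*b1 \<and> a1 + w1 + s = 2*t + 1 \<and> S_cond r s k a0 b0"
    using w1 lt s_def by (intro exI[of _ w1] exI[of _ s]) auto
next
  assume "\<exists>w1 s. w1 \<le> 2*b1 \<and> a1 + w1 + s = 2*t + 1 \<and> S_cond r s k a0 b0"
  then obtain w1 s w0 r' where w1: "w1 \<le> 2*b1" and s: "a1 + w1 + s = 2*t + 1"
    and w0: "dominated_sum b0 w0" and r': "r' \<in> {1..r}" and eq: "a0 + w0 + r' = (s+1) * 2^k"
    unfolding S_cond_def by blast
  have "dominated_sum (b1 * 2^k + b0) (w1 * 2^k + w0)"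
    using dominated_sum_concat[OF b0] dominated_sum_le_1[OF b1] w1 w0 by blast
  moreover have "a1 * 2^k + a0 + (w1 * 2^k + w0) + r' = (t+1) * 2^Suc k"
  proof -
    have "(t+1) * 2^Suc k = (a1 + w1 + s + 1) * 2^k" using s by simp
    also have "\<dots> = a1 * 2^k + w1 * 2^k + (s+1) * 2^k" by (simp add: algebra_simps)
    finally show ?thesis using eq by linarith
  qed
  ultimately show "S_cond r t (Suc k) (a1 * 2^k + a0) (b1 * 2^k + b0)"
    unfolding S_cond_def using r' by blast
qed

lemma S_cond_top_bit:
  assumes a0: "a0 < 2^k" and b0: "b0 < 2^k" and a1: "a1 \<le> 1" and b1: "b1 \<le> 1"
  shows "S_cond r t (Suc k) (a1 * 2^k + a0) (b1 * 2^k + b0) \<longleftrightarrow>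
    S_cond r (2*t + 1 - (a1 + 2*b1)) k a0 b0"
  unfolding S_cond_top_bit_iff_exists[OF a0 b0 b1]
proof
  assume "\<exists>w1 s. w1 \<le> 2*b1 \<and> a1 + w1 + s = 2*t + 1 \<and> S_cond r s k a0 b0"
  then obtain w1 s where "w1 \<le> 2*b1" "a1 + w1 + s = 2*t + 1" "S_cond r s k a0 b0" by blast
  then show "S_cond r (2*t + 1 - (a1 + 2*b1)) k a0 b0"
    using S_cond_antimono[OF a0 b0] by simp
next
  assume "S_cond r (2*t + 1 - (a1 + 2*b1)) k a0 b0"
  then show "\<exists>w1 s. w1 \<le> 2*b1 \<and> a1 + w1 + s = 2*t + 1 \<and> S_cond r s k a0 b0"
    using a1 by (intro exI[of _ "2*t + 1 - a1 - (2*t + 1 - (a1 + 2*b1))"] exI) auto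
qed

lemma finite_S_set: "finite (S_set r t k)"
  unfolding S_set_eq by (rule finite_subset[of _ "{..<2^k} \<times> {..<2^k}"]) auto

lemma S_set_empty: "r < 2^k \<Longrightarrow> 3 \<le> s \<Longrightarrow> S_set r s k = {}"
  unfolding S_set_eq using S_cond_level_le_2 by fastforce

lemma S_set_Suc_top_bits:
  "(\<lambda>(a, b). ((a div 2^k, b div 2^k), (a mod 2^k, b mod 2^k))) ` S_set r t (Suc k) =
    (SIGMA (a1, b1) : {0, 1} \<times> {0, 1}. S_set r (2*t + 1 - (a1 + 2*b1)) k)"
    (is "?split ` _ = ?Sigma")
proof
  show "?split ` S_set r t (Suc k) \<subseteq> ?Sigma"
  proof (rule image_subsetI)
    fix x assume "x \<in> S_set r t (Suc k)"
    then obtain a b where x: "x = (a, b)" and a: "a < 2^Suc k" and b: "b < 2^Suc k"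
      and ab: "S_cond r t (Suc k) a b"
      unfolding S_set_eq by auto
    note a' = top_bit_split[OF a] and b' = top_bit_split[OF b]
    have "S_cond r (2*t + 1 - (a div 2^k + 2 * (b div 2^k))) k (a mod 2^k) (b mod 2^k)"
      using S_cond_top_bit[OF a'(2) b'(2) a'(1) b'(1)] ab unfolding div_mult_mod_eq by simp
    then show "?split x \<in> ?Sigma" using x a' b' unfolding S_set_eq by auto
  qed
next
  show "?Sigma \<subseteq> ?split ` S_set r t (Suc k)"
  proof
    fix p assume "p \<in> ?Sigma"
    then obtain a1 b1 a0 b0 where p: "p = ((a1, b1), (a0, b0))"
      and a1: "a1 \<le> 1" and b1: "b1 \<le> 1" and a0: "a0 < 2^k" and b0: "b0 < 2^k"
      and ab: "S_cond r (2*t + 1 - (a1 + 2*b1)) k a0 b0"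
      unfolding S_set_eq by fastforce
    have "p = ?split (a1 * 2^k + a0, b1 * 2^k + b0)"
      using p a0 b0 by simp
    moreover have "a1 * 2^k + a0 < 2^Suc k" "b1 * 2^k + b0 < 2^Suc k"
      using a1 b1 a0 b0 by (auto simp: le_Suc_eq)
    with ab have "(a1 * 2^k + a0, b1 * 2^k + b0) \<in> S_set r t (Suc k)"
      using S_cond_top_bit[OF a0 b0 a1 b1] unfolding S_set_eq by auto
    ultimately show "p \<in> ?split ` S_set r t (Suc k)"
      by (rule image_eqI)
  qed
qed

lemma card_S_set_Suc:
  "card (S_set r t (Suc k)) = card (S_set r (2*t + 1) k) + card (S_set r (2*t) k)
     + card (S_set r (2*t + 1 - 2) k) + card (S_set r (2*t + 1 - 3) k)"
proof -
  let ?split = "\<lambda>(a :: nat, b :: nat). ((a div 2^k, b div 2^k), (a mod 2^k, b mod 2^k))"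
  have "inj ?split"
  proof (rule injI)
    fix x y :: "nat \<times> nat" assume "?split x = ?split y"
    then show "x = y"
      by (cases x; cases y) (clarsimp, metis div_mult_mod_eq)
  qed
  then have "card (S_set r t (Suc k)) = card (?split ` S_set r t (Suc k))"
    by (simp add: card_image inj_on_subset)
  also have "\<dots> = card (SIGMA (a1, b1) : {0, 1} \<times> {0, 1}. S_set r (2*t + 1 - (a1 + 2*b1)) k)"
    by (simp only: S_set_Suc_top_bits)
  also have "\<dots> = (\<Sum>(a1, b1) \<in> {0, 1} \<times> {0, 1}. card (S_set r (2*t + 1 - (a1 + 2*b1)) k))"
    by (subst card_SigmaI) (auto simp: finite_S_set intro!: sum.cong)
  finally show ?thesis by simp
qed

theorem mainTheorem7:
  fixes r l :: nat
  assumes "r \<ge> 1" and "l \<ge> 2" and "r < 2^(l-1)"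
  shows "card (S_set r 0 l) = 3 * card (S_set r 0 (l-1)) + card (S_set r 1 (l-1))
       \<and> card (S_set r 1 l) = card (S_set r 0 (l-1)) + card (S_set r 1 (l-1)) + card (S_set r 2 (l-1))
       \<and> card (S_set r 2 l) = card (S_set r 2 (l-1))"
proof -
  obtain k where l: "l = Suc k" using assms(2) by (cases l) auto
  have "r < 2^k" using assms(3) l by simp
  then have empty: "card (S_set r s k) = 0" if "3 \<le> s" for s
    using S_set_empty that by simp
  show ?thesis
    using card_S_set_Suc[of r 0 k] card_S_set_Suc[of r 1 k] card_S_set_Suc[of r 2 k]
      empty[of 3] empty[of 4] empty[of 5]
    by (simp add: l)
qed

end
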